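(* Let $h>k>2$ be integers and let $G$ be the graph with vertex set $\{0,1,\dots,2^h\}$ whose edge multiset consists of $k$ parallel edges between $i-1$ and $i$ for each $1\le i\le 2^h$, together with one edge $\{j2^i,(j+1)2^i\}$ for each $1\le i\le h$ and each $0\le j<2^{h-i}$. Then $$\inf\Big\{\max_{\emptyset\ne S\subsetneq V}\frac{1}{|E(S,\overline S)|}\sum_{e\in E(S,\overline S)}\mathcal R_D(e)\ :\ D\succ0,\ D\preceq_\square L_G\Big\}\ \ge\ \frac{h^2}{8(h+k)^2}.$$
   Context: $E(S,\overline S)$ is the multiset of edges with exactly one endpoint in $S$ (averages count parallel edges with multiplicity). For each edge $e=\{u,v\}$ fix an orientation, $\chi_e=\mathbf 1_u-\mathbf 1_v$, $L_G=\sum_e\chi_e\chi_e^\intercal$, $\mathcal R_D(e)=\chi_e^\intercal D^{-1}\chi_e$ for symmetric positive definite $D$; $A\preceq_\square B$ means $\mathbf 1_S^\intercal A\mathbf 1_S\le\mathbf 1_S^\intercal B\mathbf 1_S$ for all $\emptyset\ne S\subsetneq V$. *)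

theory Defs
  imports "Jordan_Normal_Form.Gauss_Jordan_Elimination"
begin

(* Vertices of the graph are 0..N, N = 2^h, i.e. indices 0..<nV with nV = 2^h + 1.
   Edges are oriented pairs (u,v); the edge multiset is represented as a list. *)

definition nV :: "nat \<Rightarrow> nat" where
  "nV h = 2 ^ h + 1"

definition G_edges :: "nat \<Rightarrow> nat \<Rightarrow> (nat \<times> nat) list" where
  "G_edges h k =
     concat (map (\<lambda>i. replicate k (i - 1, i)) [1..<2 ^ h + 1]) @
     concat (map (\<lambda>i. map (\<lambda>j. (j * 2 ^ i, (j + 1) * 2 ^ i)) [0..<2 ^ (h - i)]) [1..<h + 1])"

definition chi :: "nat \<Rightarrow> nat \<times> nat \<Rightarrow> real vec" where
  "chi n e = vec n (\<lambda>i. (if i = fst e then 1 else 0) - (if i = snd e then 1 else 0))"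

definition ind :: "nat \<Rightarrow> nat set \<Rightarrow> real vec" where
  "ind n S = vec n (\<lambda>i. if i \<in> S then 1 else 0)"

definition laplacian :: "nat \<Rightarrow> (nat \<times> nat) list \<Rightarrow> real mat" where
  "laplacian n E = mat n n (\<lambda>(i, j). sum_list (map (\<lambda>e. chi n e $ i * chi n e $ j) E))"

definition sym_pos_def :: "nat \<Rightarrow> real mat \<Rightarrow> bool" where
  "sym_pos_def n D \<longleftrightarrow> D \<in> carrier_mat n n \<and> D\<^sup>T = D \<and>
     (\<forall>x \<in> carrier_vec n. x \<noteq> 0\<^sub>v n \<longrightarrow> x \<bullet> (D *\<^sub>v x) > 0)"

definition cut_le :: "nat \<Rightarrow> real mat \<Rightarrow> real mat \<Rightarrow> bool" where
  "cut_le n A B \<longleftrightarrow> (\<forall>S. S \<subseteq> {0..<n} \<and> S \<noteq> {} \<and> S \<noteq> {0..<n} \<longrightarrow>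
      ind n S \<bullet> (A *\<^sub>v ind n S) \<le> ind n S \<bullet> (B *\<^sub>v ind n S))"

definition Rres :: "nat \<Rightarrow> real mat \<Rightarrow> nat \<times> nat \<Rightarrow> real" where
  "Rres n D e = chi n e \<bullet> (the (mat_inverse D) *\<^sub>v chi n e)"

definition cut_edges :: "nat set \<Rightarrow> (nat \<times> nat) list \<Rightarrow> (nat \<times> nat) list" where
  "cut_edges S E = filter (\<lambda>e. (fst e \<in> S) \<noteq> (snd e \<in> S)) E"

definition cut_avg :: "nat \<Rightarrow> real mat \<Rightarrow> (nat \<times> nat) list \<Rightarrow> nat set \<Rightarrow> real" where
  "cut_avg n D E S = sum_list (map (Rres n D) (cut_edges S E)) / real (length (cut_edges S E))"

end

theory Submission
  imports Defs "Jordan_Normal_Form.Determinant"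
begin

text \<open>
  Each is crossed by the \<open>k\<close> unit edges
  \<open>(s, s+1)\<close> and by at most one edge of every level, so it has at most \<open>h + k\<close> edges, and
  \<open>D \<preceq>\<^sub>\<box> L\<^sub>G\<close> bounds \<open>1\<^sub>S\<^sup>T D 1\<^sub>S\<close> by \<open>h + k\<close> on it. Summed over all prefix cuts, the level-\<open>i\<close>
  edges contribute \<open>2^i \<Sum>\<^sub>j R\<^sub>D(e\<^sub>i\<^sub>j)\<close>. Since \<open>R\<^sub>D(e) \<ge> 2 \<chi>\<^sub>e\<^sup>T f - f\<^sup>T D f\<close> for every \<open>f\<close>, testing the
  two level-\<open>i\<close> edges inside a level-\<open>(i+1)\<close> block against the difference of the two
  corresponding block sums of prefix indicators bounds their resistances from below by a
  constant minus a Haar-type energy difference. These differences telescope over the levels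
  and the top energy is at most \<open>2^h (h + k)\<close>, so the total is at least
  \<open>2^h (h - 1)\<^sup>2 / (4 (h + k))\<close>. Hence some prefix cut has average at least
  \<open>(h - 1)\<^sup>2 / (4 (h + k)\<^sup>2) \<ge> h\<^sup>2 / (8 (h + k)\<^sup>2)\<close>.
\<close>

lemma sym_pos_def_mat_inverse:
  fixes D :: "real mat"
  assumes "sym_pos_def n D"
  obtains B where "mat_inverse D = Some B" "D * B = 1\<^sub>m n" "B \<in> carrier_mat n n"
proof -
  have D: "D \<in> carrier_mat n n" using assms by (simp add: sym_pos_def_def)
  have "det D \<noteq> 0"
  proof
    assume "det D = 0"
    then obtain v where "v \<in> carrier_vec n" "v \<noteq> 0\<^sub>v n" "D *\<^sub>v v = 0\<^sub>v n"
      using det_0_iff_vec_prod_zero_field[OF D] by blast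
    with assms show False unfolding sym_pos_def_def by force
  qed
  then have "D \<in> Units (ring_mat TYPE(real) n ())" by (rule det_non_zero_imp_unit[OF D])
  then have "mat_inverse D \<noteq> None" using mat_inverse(1)[OF D, of "()"] by blast
  with mat_inverse(2)[OF D] that show thesis by blast
qed

lemma sym_pos_def_quad_nonneg:
  assumes "sym_pos_def n D" "x \<in> carrier_vec n"
  shows "0 \<le> x \<bullet> (D *\<^sub>v x)"
  using assms by (cases "x = 0\<^sub>v n") (auto simp: sym_pos_def_def less_imp_le)

text \<open>With \<open>w = D\<^sup>-\<^sup>1 c\<close> the difference of the two sides is \<open>(w - z)\<^sup>T D (w - z) \<ge> 0\<close>.\<close>

lemma mat_inverse_quad_ge:
  fixes D :: "real mat"
  assumes sp: "sym_pos_def n D" and c: "c \<in> carrier_vec n" and z: "z \<in> carrier_vec n"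
  shows "2 * (c \<bullet> z) - z \<bullet> (D *\<^sub>v z) \<le> c \<bullet> (the (mat_inverse D) *\<^sub>v c)"
proof -
  have D: "D \<in> carrier_mat n n" and T: "D\<^sup>T = D" using sp by (auto simp: sym_pos_def_def)
  obtain B where B: "mat_inverse D = Some B" "D * B = 1\<^sub>m n" "B \<in> carrier_mat n n"
    using sp by (rule sym_pos_def_mat_inverse)
  define w where "w = B *\<^sub>v c"
  have w: "w \<in> carrier_vec n" using B c by (simp add: w_def)
  have Dw: "D *\<^sub>v w = c" unfolding w_def using B D c
    by (metis assoc_mult_mat_vec one_mult_mat_vec)
  have wDz: "w \<bullet> (D *\<^sub>v z) = c \<bullet> z"
    using transpose_vec_mult_scalar[OF D z w] by (simp add: T Dw)
  have "0 \<le> (w - z) \<bullet> (D *\<^sub>v (w - z))"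
    using sp w z by (intro sym_pos_def_quad_nonneg) auto
  also have "D *\<^sub>v (w - z) = c - D *\<^sub>v z"
    using D w z Dw by (metis mult_minus_distrib_mat_vec)
  also have "(w - z) \<bullet> (c - D *\<^sub>v z) = c \<bullet> w - 2 * (c \<bullet> z) + z \<bullet> (D *\<^sub>v z)"
    using w z c D wDz
    by (simp add: minus_scalar_prod_distrib scalar_prod_minus_distrib comm_scalar_prod[of w n c]
        comm_scalar_prod[of z n c])
  finally show ?thesis using B(1) by (simp add: w_def)
qed

lemma Rres_nonneg:
  assumes "sym_pos_def n D"
  shows "0 \<le> Rres n D e"
proof -
  have "D \<in> carrier_mat n n" using assms by (simp add: sym_pos_def_def)
  then show ?thesis
    using mat_inverse_quad_ge[OF assms, of "chi n e" "0\<^sub>v n"] by (simp add: Rres_def chi_def)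
qed

definition qform :: "nat \<Rightarrow> real mat \<Rightarrow> (nat \<Rightarrow> real) \<Rightarrow> real" where
  "qform n D f = (\<Sum>u<n. \<Sum>v<n. f u * D $$ (u, v) * f v)"

lemma qform_eq_scalar_prod:
  assumes "D \<in> carrier_mat n n"
  shows "qform n D f = vec n f \<bullet> (D *\<^sub>v vec n f)"
  using assms by (auto simp: qform_def scalar_prod_def mult_mat_vec_def row_def atLeast0LessThan
      sum_distrib_left mult.assoc intro!: sum.cong)

lemma qform_nonneg:
  assumes "sym_pos_def n D"
  shows "0 \<le> qform n D f"
  using assms sym_pos_def_quad_nonneg[OF assms, of "vec n f"]
  by (simp add: qform_eq_scalar_prod sym_pos_def_def)

lemma qform_parallelogram:
  "qform n D (\<lambda>v. a v - b v) + qform n D (\<lambda>v. a v + b v) = 2 * qform n D a + 2 * qform n D b"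
  unfolding qform_def sum.distrib[symmetric] sum_distrib_left
  by (intro sum.cong refl) (simp add: algebra_simps)

lemma qform_scale: "qform n D (\<lambda>v. c * a v) = c\<^sup>2 * qform n D a"
  unfolding qform_def sum_distrib_left
  by (intro sum.cong refl) (simp add: algebra_simps power2_eq_square)

lemma qform_diff_commute: "qform n D (\<lambda>v. a v - b v) = qform n D (\<lambda>v. b v - a v)"
  unfolding qform_def by (intro sum.cong refl) (simp add: algebra_simps)

lemma chi_scalar_prod:
  assumes "a < n" "b < n" "x \<in> carrier_vec n"
  shows "chi n (a, b) \<bullet> x = x $ a - x $ b"
proof -
  have "chi n (a, b) \<bullet> x
      = (\<Sum>i<n. if i = a then x $ i else 0) - (\<Sum>i<n. if i = b then x $ i else 0)"
    using assms(3) unfolding sum_subtractf[symmetric]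
    by (auto simp: chi_def scalar_prod_def atLeast0LessThan intro!: sum.cong)
  then show ?thesis using assms(1,2) by simp
qed

lemma Rres_ge_qform:
  assumes "sym_pos_def n D" "a < n" "b < n"
  shows "2 * (f a - f b) - qform n D f \<le> Rres n D (a, b)"
proof -
  have "D \<in> carrier_mat n n" using assms(1) by (simp add: sym_pos_def_def)
  moreover have "chi n (a, b) \<in> carrier_vec n" by (simp add: chi_def)
  ultimately show ?thesis
    using mat_inverse_quad_ge[OF assms(1), of "chi n (a, b)" "vec n f"] assms(2,3)
    by (simp add: Rres_def qform_eq_scalar_prod chi_scalar_prod)
qed

lemma sum_square_linear_forms:
  fixes x :: "nat \<Rightarrow> 'a::comm_semiring_1"
  shows "(\<Sum>i<n. x i * (\<Sum>j<n. (\<Sum>m<M. c m i * c m j) * x j)) = (\<Sum>m<M. (\<Sum>i<n. c m i * x i)\<^sup>2)"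
proof -
  have "(\<Sum>i<n. x i * (\<Sum>j<n. (\<Sum>m<M. c m i * c m j) * x j))
      = (\<Sum>i<n. \<Sum>m<M. \<Sum>j<n. c m i * x i * (c m j * x j))"
    by (simp add: sum_distrib_left sum_distrib_right mult_ac sum.swap[of _ "{..<M}"])
  also have "\<dots> = (\<Sum>m<M. (\<Sum>i<n. c m i * x i)\<^sup>2)"
    by (subst sum.swap) (simp add: power2_eq_square sum_product)
  finally show ?thesis .
qed

lemma laplacian_cut_form:
  assumes "\<forall>e\<in>set E. fst e < n \<and> snd e < n"
  shows "ind n S \<bullet> (laplacian n E *\<^sub>v ind n S) = real (length (cut_edges S E))"
proof -
  define x where "x i = (if i \<in> S then 1 else (0::real))" for i
  define c where "c m i = chi n (E ! m) $ i" for m i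
  have "ind n S \<bullet> (laplacian n E *\<^sub>v ind n S)
      = (\<Sum>i<n. x i * (\<Sum>j<n. (\<Sum>m<length E. c m i * c m j) * x j))"
    by (auto simp: ind_def laplacian_def scalar_prod_def mult_mat_vec_def row_def atLeast0LessThan
        x_def c_def sum_list_sum_nth intro!: sum.cong)
  also have "\<dots> = (\<Sum>m<length E. (chi n (E ! m) \<bullet> ind n S)\<^sup>2)"
    unfolding sum_square_linear_forms
    by (auto simp: c_def x_def scalar_prod_def ind_def atLeast0LessThan intro!: sum.cong)
  also have "\<dots> = (\<Sum>m<length E. if (fst (E ! m) \<in> S) \<noteq> (snd (E ! m) \<in> S) then 1 else 0)"
  proof (intro sum.cong refl)
    fix m assume "m \<in> {..<length E}"
    then have "fst (E ! m) < n" "snd (E ! m) < n" using assms by auto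
    then show "(chi n (E ! m) \<bullet> ind n S)\<^sup>2 = (if (fst (E ! m) \<in> S) \<noteq> (snd (E ! m) \<in> S) then 1 else 0)"
      using chi_scalar_prod[of "fst (E ! m)" n "snd (E ! m)" "ind n S"] by (auto simp: ind_def)
  qed
  also have "\<dots> = real (length (cut_edges S E))"
    by (simp add: cut_edges_def length_filter_conv_card sum.If_cases atLeast0LessThan
        Collect_conj_eq[symmetric] lessThan_def)
  finally show ?thesis .
qed

definition level_edge :: "nat \<Rightarrow> nat \<Rightarrow> nat \<times> nat" where
  "level_edge i j = (j * 2 ^ i, (j + 1) * 2 ^ i)"

definition unit_edges :: "nat \<Rightarrow> nat \<Rightarrow> (nat \<times> nat) list" where
  "unit_edges N k = concat (map (\<lambda>i. replicate k (i - 1, i)) [1..<N + 1])"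

definition level_edges :: "nat \<Rightarrow> (nat \<times> nat) list" where
  "level_edges h = concat (map (\<lambda>i. map (level_edge i) [0..<2 ^ (h - i)]) [1..<h + 1])"

lemma G_edges_eq: "G_edges h k = unit_edges (2 ^ h) k @ level_edges h"
  by (simp add: G_edges_def unit_edges_def level_edges_def level_edge_def[abs_def])

lemma level_edge_le:
  assumes "j < 2 ^ (h - i)" "i \<le> h"
  shows "snd (level_edge i j) \<le> 2 ^ h"
proof -
  have "(j + 1) * 2 ^ i \<le> 2 ^ (h - i) * (2::nat) ^ i" using assms by (intro mult_right_mono) auto
  also have "\<dots> = 2 ^ h" using assms by (simp add: power_add[symmetric])
  finally show ?thesis by (simp add: level_edge_def)
qed

lemma G_edges_in_range: "\<forall>e\<in>set (G_edges h k). fst e < nV h \<and> snd e < nV h"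
proof
  fix e assume "e \<in> set (G_edges h k)"
  then consider (unit) i where "1 \<le> i" "i < 2 ^ h + 1" "e = (i - 1, i)"
    | (level) i j where "1 \<le> i" "i \<le> h" "j < 2 ^ (h - i)" "e = level_edge i j"
    by (auto simp: G_edges_eq unit_edges_def level_edges_def split: if_splits)
  then show "fst e < nV h \<and> snd e < nV h"
  proof cases
    case level
    then have "snd e \<le> 2 ^ h" using level_edge_le by blast
    moreover have "fst e \<le> snd e" using level by (simp add: level_edge_def)
    ultimately show ?thesis by (simp add: nV_def)
  qed (auto simp: nV_def)
qed

lemma cut_edges_concat: "cut_edges S (concat xss) = concat (map (cut_edges S) xss)"
  by (simp add: cut_edges_def[abs_def] filter_concat)

lemma sum_list_map_concat: "sum_list (map f (concat xss)) = (\<Sum>xs\<leftarrow>xss. sum_list (map f xs))"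
  by (induct xss) auto

lemma length_cut_unit_edges:
  assumes "1 \<le> t" "t \<le> N"
  shows "length (cut_edges {0..<t} (unit_edges N k)) = k"
proof -
  have "length (cut_edges {0..<t} (unit_edges N k))
      = (\<Sum>i\<in>{1..<N + 1}. length (cut_edges {0..<t} (replicate k (i - 1, i))))"
    by (simp add: unit_edges_def cut_edges_concat length_concat comp_def
        sum_set_upt_conv_sum_list_nat[symmetric])
  also have "\<dots> = (\<Sum>i\<in>{1..<N + 1}. if i = t then k else 0)"
    by (intro sum.cong refl) (auto simp: cut_edges_def filter_replicate)
  finally show ?thesis using assms by simp
qed

lemma length_cut_level_le_1:
  "length (cut_edges {0..<t} (map (level_edge i) [0..<M])) \<le> 1"
proof -
  let ?J = "{j. j < M \<and> j * 2 ^ i < t \<and> t \<le> (j + 1) * 2 ^ i}"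
  have "length (cut_edges {0..<t} (map (level_edge i) [0..<M])) = card ?J"
    unfolding cut_edges_def length_filter_conv_card
    by (rule arg_cong[where f = card]) (auto simp: level_edge_def)
  also have "card ?J \<le> Suc 0"
  proof (subst card_le_Suc0_iff_eq, simp, intro ballI)
    fix j j' assume "j \<in> ?J" "j' \<in> ?J"
    then have "j * 2 ^ i < (j' + 1) * 2 ^ i" "j' * 2 ^ i < (j + 1) * (2::nat) ^ i" by auto
    then show "j = j'" by (metis mult_less_cancel2 less_Suc_eq_le Suc_eq_plus1 le_antisym)
  qed
  finally show ?thesis by simp
qed

lemma length_cut_level_edges_le: "length (cut_edges {0..<t} (level_edges h)) \<le> h"
proof -
  have "length (cut_edges {0..<t} (level_edges h))
      = (\<Sum>i\<in>{1..<h + 1}. length (cut_edges {0..<t} (map (level_edge i) [0..<2 ^ (h - i)])))"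
    by (simp add: level_edges_def cut_edges_concat length_concat comp_def
        sum_set_upt_conv_sum_list_nat[symmetric])
  also have "\<dots> \<le> (\<Sum>i\<in>{1..<h + 1}. 1)" by (intro sum_mono length_cut_level_le_1)
  finally show ?thesis by simp
qed

lemma length_cut_prefix_le:
  assumes "1 \<le> t" "t \<le> 2 ^ h"
  shows "length (cut_edges {0..<t} (G_edges h k)) \<le> h + k"
  using length_cut_unit_edges[OF assms, of k] length_cut_level_edges_le[of t h]
  by (simp add: G_edges_eq cut_edges_def)

lemma level_edge_crosses_prefix:
  "fst (level_edge i (s div 2 ^ i)) < Suc s \<and> \<not> snd (level_edge i (s div 2 ^ i)) < Suc s"
proof -
  have "s < (s div 2 ^ i + 1) * 2 ^ i"
    using dividend_less_div_times[of "2 ^ i" s] by (simp add: algebra_simps)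
  then show ?thesis by (simp add: level_edge_def le_imp_less_Suc)
qed

lemma sum_list_cut_prefix_ge:
  fixes R :: "nat \<times> nat \<Rightarrow> real"
  assumes R: "\<And>e. 0 \<le> R e" and s: "s < 2 ^ h"
  shows "(\<Sum>i\<in>{1..<h}. R (level_edge i (s div 2 ^ i)))
    \<le> sum_list (map R (cut_edges {0..<Suc s} (G_edges h k)))"
proof -
  let ?cut = "\<lambda>i. cut_edges {0..<Suc s} (map (level_edge i) [0..<2 ^ (h - i)])"
  have "R (level_edge i (s div 2 ^ i)) \<le> sum_list (map R (?cut i))" if "i < h" for i
  proof (rule member_le_sum_list)
    have "s < 2 ^ (h - i) * 2 ^ i" using s that by (simp add: power_add[symmetric])
    then have "s div 2 ^ i < 2 ^ (h - i)" by (simp add: div_less_iff_less_mult)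
    then show "R (level_edge i (s div 2 ^ i)) \<in> set (map R (?cut i))"
      using level_edge_crosses_prefix[of i s] by (auto simp: cut_edges_def)
  qed (auto intro: R)
  then have "(\<Sum>i\<in>{1..<h}. R (level_edge i (s div 2 ^ i))) \<le> (\<Sum>i\<in>{1..<h}. sum_list (map R (?cut i)))"
    by (intro sum_mono) auto
  also have "\<dots> \<le> (\<Sum>i\<in>{1..<h + 1}. sum_list (map R (?cut i)))"
    by (rule sum_mono2) (auto intro!: sum_list_nonneg R)
  also have "\<dots> = sum_list (map R (cut_edges {0..<Suc s} (level_edges h)))"
    by (simp add: level_edges_def cut_edges_concat sum_list_map_concat comp_def
        sum_set_upt_conv_sum_list_nat[symmetric])
  also have "\<dots> \<le> sum_list (map R (cut_edges {0..<Suc s} (G_edges h k)))"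
  proof -
    have "0 \<le> sum_list (map R (cut_edges {0..<Suc s} (unit_edges (2 ^ h) k)))"
      by (rule sum_list_nonneg) (auto intro: R)
    then show ?thesis by (simp add: G_edges_eq cut_edges_def)
  qed
  finally show ?thesis .
qed

lemma prefix_cut_proper:
  assumes "s < 2 ^ h"
  shows "{0..<Suc s} \<subseteq> {0..<nV h} \<and> {0..<Suc s} \<noteq> {} \<and> {0..<Suc s} \<noteq> {0..<nV h}"
  using assms by (auto simp: nV_def)

lemma cut_avg_le_Max:
  assumes "S \<subseteq> {0..<n} \<and> S \<noteq> {} \<and> S \<noteq> {0..<n}"
  shows "cut_avg n D E S \<le> Max {cut_avg n D E S | S. S \<subseteq> {0..<n} \<and> S \<noteq> {} \<and> S \<noteq> {0..<n}}"
proof (rule Max_ge)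
  show "finite {cut_avg n D E S | S. S \<subseteq> {0..<n} \<and> S \<noteq> {} \<and> S \<noteq> {0..<n}}"
    by (rule finite_subset[of _ "(\<lambda>S. cut_avg n D E S) ` Pow {0..<n}"]) auto
qed (use assms in blast)

lemma prefix_cut_Rres_le:
  assumes sp: "sym_pos_def (nV h) D" and s: "s < 2 ^ h"
  shows "(\<Sum>i\<in>{1..<h}. Rres (nV h) D (level_edge i (s div 2 ^ i)))
    \<le> real (h + k) * cut_avg (nV h) D (G_edges h k) {0..<Suc s}"
proof -
  let ?cut = "cut_edges {0..<Suc s} (G_edges h k)"
  define \<Sigma> where "\<Sigma> = sum_list (map (Rres (nV h) D) ?cut)"
  have \<Sigma>: "0 \<le> \<Sigma>" unfolding \<Sigma>_def by (intro sum_list_nonneg) (auto intro: Rres_nonneg[OF sp])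
  have "(\<Sum>i\<in>{1..<h}. Rres (nV h) D (level_edge i (s div 2 ^ i))) \<le> \<Sigma>"
    unfolding \<Sigma>_def using sp s by (intro sum_list_cut_prefix_ge Rres_nonneg)
  also have "\<dots> \<le> real (h + k) * (\<Sigma> / real (length ?cut))"
  proof (cases "?cut = []")
    case False
    then have "\<Sigma> = real (length ?cut) * (\<Sigma> / real (length ?cut))" by simp
    also have "\<dots> \<le> real (h + k) * (\<Sigma> / real (length ?cut))"
      using length_cut_prefix_le[of "Suc s" h k] s \<Sigma> by (intro mult_right_mono) auto
    finally show ?thesis .
  qed (simp add: \<Sigma>_def)
  finally show ?thesis by (simp add: cut_avg_def \<Sigma>_def)
qed

lemma prefix_level_Rres_le_Max:
  assumes "sym_pos_def (nV h) D" and s: "s < 2 ^ h"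
  shows "(\<Sum>i\<in>{1..<h}. Rres (nV h) D (level_edge i (s div 2 ^ i)))
    \<le> real (h + k) * Max {cut_avg (nV h) D (G_edges h k) S | S. S \<subseteq> {0..<nV h} \<and> S \<noteq> {} \<and> S \<noteq> {0..<nV h}}"
  using prefix_cut_Rres_le[OF assms, of k]
    mult_left_mono[OF cut_avg_le_Max[OF prefix_cut_proper[OF s], of D "G_edges h k"], of "real (h + k)"]
  by simp

lemma sum_div_group:
  fixes f :: "nat \<Rightarrow> 'a::comm_semiring_1"
  assumes "0 < p"
  shows "(\<Sum>s<m * p. f (s div p)) = of_nat p * (\<Sum>j<m. f j)"
proof -
  have "(\<Sum>s<m * p. f (s div p)) = (\<Sum>j<m. \<Sum>s\<in>{j * p..<j * p + p}. f (s div p))"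
    by (rule sum.nat_group[symmetric])
  also have "\<dots> = (\<Sum>j<m. \<Sum>s\<in>{j * p..<j * p + p}. f j)"
  proof (intro sum.cong refl)
    fix j s assume "s \<in> {j * p..<j * p + p}"
    then have "s div p = j" by (intro div_nat_eqI) (auto simp: mult.commute)
    then show "f (s div p) = f j" by simp
  qed
  finally show ?thesis by (simp add: sum_distrib_left mult.commute)
qed

lemma sum_prefix_level_edges:
  fixes R :: "nat \<times> nat \<Rightarrow> real"
  shows "(\<Sum>s<2 ^ h. \<Sum>i\<in>{1..<h}. R (level_edge i (s div 2 ^ i)))
    = (\<Sum>i\<in>{1..<h}. 2 ^ i * (\<Sum>j<2 ^ (h - i). R (level_edge i j)))"
proof -
  have "(\<Sum>s<2 ^ h. R (level_edge i (s div 2 ^ i))) = 2 ^ i * (\<Sum>j<2 ^ (h - i). R (level_edge i j))"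
    if "i < h" for i
  proof -
    have "(2::nat) ^ h = 2 ^ (h - i) * 2 ^ i" using that by (simp add: power_add[symmetric])
    then show ?thesis using sum_div_group[of "2 ^ i" "\<lambda>j. R (level_edge i j)" "2 ^ (h - i)"] by simp
  qed
  then show ?thesis by (subst sum.swap) (auto intro: sum.cong)
qed

definition block_ind :: "nat \<Rightarrow> nat \<Rightarrow> nat \<Rightarrow> real" where
  "block_ind i j v = (\<Sum>t\<in>{j * 2 ^ i<..(j + 1) * 2 ^ i}. if v < t then 1 else 0)"

lemma block_ind_below: "v \<le> j * 2 ^ i \<Longrightarrow> block_ind i j v = 2 ^ i"
  by (simp add: block_ind_def)

lemma block_ind_above: "(j + 1) * 2 ^ i \<le> v \<Longrightarrow> block_ind i j v = 0"
  unfolding block_ind_def by (intro sum.neutral) auto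

lemma block_ind_Suc: "block_ind (Suc i) j v = block_ind i (2 * j) v + block_ind i (2 * j + 1) v"
proof -
  have "{j * 2 ^ Suc i<..(j + 1) * 2 ^ Suc i}
      = {2 * j * 2 ^ i<..(2 * j + 1) * 2 ^ i} \<union> {(2 * j + 1) * 2 ^ i<..(2 * j + 1 + 1) * 2 ^ i}"
    by auto
  then show ?thesis unfolding block_ind_def by (simp add: sum.union_disjoint)
qed

lemma block_ind_0: "vec n (block_ind 0 j) = ind n {0..<Suc j}"
proof -
  have "{j * 2 ^ 0<..(j + 1) * 2 ^ 0} = {Suc j}" by auto
  then show ?thesis by (intro eq_vecI) (auto simp: block_ind_def ind_def)
qed

definition level_energy :: "nat \<Rightarrow> nat \<Rightarrow> real mat \<Rightarrow> nat \<Rightarrow> real" where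
  "level_energy h n D i = (\<Sum>j<2 ^ (h - i). qform n D (block_ind i j)) / 2 ^ i"

lemma sum_pairs:
  fixes g :: "nat \<Rightarrow> 'a::comm_monoid_add"
  shows "(\<Sum>j<2 * M. g j) = (\<Sum>m<M. g (2 * m) + g (2 * m + 1))"
  using sum.nat_group[of "\<lambda>s. g s" 2 M]
  by (simp add: mult.commute numeral_2_eq_2 atLeastLessThanSuc add.commute)

lemma level_energy_diff:
  assumes "i < h"
  shows "level_energy h n D i - level_energy h n D (Suc i)
    = (\<Sum>m<2 ^ (h - Suc i). qform n D (\<lambda>v. block_ind i (2 * m) v - block_ind i (2 * m + 1) v))
      / 2 ^ Suc i"
proof -
  let ?M = "2 ^ (h - Suc i) :: nat"
  have M: "(2::nat) ^ (h - i) = 2 * ?M" using assms by (metis Suc_diff_Suc power_Suc)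
  have "qform n D (\<lambda>v. block_ind i (2 * m) v - block_ind i (2 * m + 1) v)
      = 2 * qform n D (block_ind i (2 * m)) + 2 * qform n D (block_ind i (2 * m + 1))
        - qform n D (block_ind (Suc i) m)" for m
  proof -
    have "block_ind (Suc i) m = (\<lambda>v. block_ind i (2 * m) v + block_ind i (2 * m + 1) v)"
      by (rule ext) (rule block_ind_Suc)
    then show ?thesis
      using qform_parallelogram[of n D "block_ind i (2 * m)" "block_ind i (2 * m + 1)"] by simp
  qed
  then have "(\<Sum>m<?M. qform n D (\<lambda>v. block_ind i (2 * m) v - block_ind i (2 * m + 1) v))
      = (\<Sum>m<?M. 2 * qform n D (block_ind i (2 * m)) + 2 * qform n D (block_ind i (2 * m + 1))
                 - qform n D (block_ind (Suc i) m))"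
    by simp
  also have "\<dots> = 2 * (\<Sum>j<2 ^ (h - i). qform n D (block_ind i j))
      - (\<Sum>m<?M. qform n D (block_ind (Suc i) m))"
    unfolding M sum_pairs by (simp add: sum_subtractf sum_distrib_left sum.distrib)
  finally show ?thesis by (simp add: level_energy_def field_simps)
qed

lemma level_energy_Suc_le:
  assumes "sym_pos_def n D" "i < h"
  shows "level_energy h n D (Suc i) \<le> level_energy h n D i"
proof -
  have "0 \<le> (\<Sum>m<2 ^ (h - Suc i). qform n D (\<lambda>v. block_ind i (2 * m) v - block_ind i (2 * m + 1) v))
      / 2 ^ Suc i"
    by (intro divide_nonneg_pos sum_nonneg qform_nonneg[OF assms(1)]) auto
  then show ?thesis using level_energy_diff[OF assms(2), of n D] by linarith
qed

lemma level_energy_nonneg: "sym_pos_def n D \<Longrightarrow> 0 \<le> level_energy h n D i"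
  unfolding level_energy_def by (intro divide_nonneg_pos sum_nonneg qform_nonneg) auto

lemma level_energy_0_le:
  assumes sp: "sym_pos_def (nV h) D" and le: "cut_le (nV h) D (laplacian (nV h) (G_edges h k))"
  shows "level_energy h (nV h) D 0 \<le> 2 ^ h * real (h + k)"
proof -
  have "qform (nV h) D (block_ind 0 s) \<le> real (h + k)" if s: "s < 2 ^ h" for s
  proof -
    let ?S = "{0..<Suc s}"
    have "qform (nV h) D (block_ind 0 s) = ind (nV h) ?S \<bullet> (D *\<^sub>v ind (nV h) ?S)"
      using sp by (simp add: qform_eq_scalar_prod block_ind_0 sym_pos_def_def)
    also have "\<dots> \<le> ind (nV h) ?S \<bullet> (laplacian (nV h) (G_edges h k) *\<^sub>v ind (nV h) ?S)"
      using le prefix_cut_proper[OF s] unfolding cut_le_def by blast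
    also have "\<dots> \<le> real (h + k)"
      using laplacian_cut_form[OF G_edges_in_range] length_cut_prefix_le[of "Suc s" h k] s by simp
    finally show ?thesis .
  qed
  then have "(\<Sum>j<2 ^ h. qform (nV h) D (block_ind 0 j)) \<le> (\<Sum>j<(2::nat) ^ h. real (h + k))"
    by (intro sum_mono) auto
  then show ?thesis by (simp add: level_energy_def)
qed

text \<open>
  The level-\<open>i\<close> edges \<open>2m\<close> and \<open>2m+1\<close> are tested against \<open>\<plusminus>\<alpha>\<close> times the difference of the
  level-\<open>i\<close> block sums \<open>2m\<close> and \<open>2m+1\<close>, which changes by \<open>2^i\<close> along each of the two edges.
\<close>

lemma level_pair_Rres_ge:
  assumes sp: "sym_pos_def n D" and n: "(2 * m + 2) * 2 ^ i < n"
  shows "4 * \<alpha> * 2 ^ i - 2 * \<alpha>\<^sup>2 * qform n D (\<lambda>v. block_ind i (2 * m) v - block_ind i (2 * m + 1) v)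
    \<le> Rres n D (level_edge i (2 * m)) + Rres n D (level_edge i (2 * m + 1))"
proof -
  have a: "2 * m * 2 ^ i < n" "(2 * m + 1) * 2 ^ i < n" using n by (auto simp: algebra_simps)
  define f where "f v = \<alpha> * (block_ind i (2 * m) v - block_ind i (2 * m + 1) v)" for v
  define g where "g v = \<alpha> * (block_ind i (2 * m + 1) v - block_ind i (2 * m) v)" for v
  have "2 * (f (2 * m * 2 ^ i) - f ((2 * m + 1) * 2 ^ i)) - qform n D f
      \<le> Rres n D (2 * m * 2 ^ i, (2 * m + 1) * 2 ^ i)"
    by (rule Rres_ge_qform[OF sp a])
  moreover have "2 * (g ((2 * m + 1) * 2 ^ i) - g ((2 * m + 2) * 2 ^ i)) - qform n D g
      \<le> Rres n D ((2 * m + 1) * 2 ^ i, (2 * m + 2) * 2 ^ i)"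
    by (rule Rres_ge_qform[OF sp a(2) n])
  moreover have "f (2 * m * 2 ^ i) - f ((2 * m + 1) * 2 ^ i) = \<alpha> * 2 ^ i"
    "g ((2 * m + 1) * 2 ^ i) - g ((2 * m + 2) * 2 ^ i) = \<alpha> * 2 ^ i"
    by (simp_all add: f_def g_def block_ind_below block_ind_above algebra_simps)
  moreover have "qform n D f = \<alpha>\<^sup>2 * qform n D (\<lambda>v. block_ind i (2 * m) v - block_ind i (2 * m + 1) v)"
    "qform n D g = \<alpha>\<^sup>2 * qform n D (\<lambda>v. block_ind i (2 * m) v - block_ind i (2 * m + 1) v)"
    unfolding f_def g_def qform_scale by (simp_all add: qform_diff_commute)
  ultimately show ?thesis by (simp add: level_edge_def algebra_simps)
qed

lemma level_Rres_ge:
  fixes \<mu> :: real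
  assumes sp: "sym_pos_def n D" and i: "i < h" and n: "2 ^ h < n"
  shows "2 ^ h * \<mu> - \<mu>\<^sup>2 * (level_energy h n D i - level_energy h n D (Suc i))
    \<le> 2 ^ i * (\<Sum>j<2 ^ (h - i). Rres n D (level_edge i j))"
proof -
  define M :: nat where "M = 2 ^ (h - Suc i)"
  have M: "(2::nat) ^ (h - i) = 2 * M" unfolding M_def using i by (metis Suc_diff_Suc power_Suc)
  define P :: real where "P = 2 ^ i"
  have P: "0 < P" by (simp add: P_def)
  define \<alpha> where "\<alpha> = \<mu> / (2 * P)"
  define Q where "Q m = qform n D (\<lambda>v. block_ind i (2 * m) v - block_ind i (2 * m + 1) v)" for m
  have "4 * \<alpha> * P - 2 * \<alpha>\<^sup>2 * Q m \<le> Rres n D (level_edge i (2 * m)) + Rres n D (level_edge i (2 * m + 1))"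
    if "m < M" for m
  proof -
    have "(2 * m + 2) * 2 ^ i \<le> (2::nat) ^ h"
      using level_edge_le[of "2 * m + 1" h i] that M i by (simp add: level_edge_def)
    then show ?thesis unfolding P_def Q_def using n by (intro level_pair_Rres_ge sp) simp
  qed
  then have R: "real M * (4 * \<alpha> * P) - 2 * \<alpha>\<^sup>2 * (\<Sum>m<M. Q m) \<le> (\<Sum>j<2 ^ (h - i). Rres n D (level_edge i j))"
    using sum_mono[of "{..<M}" "\<lambda>m. 4 * \<alpha> * P - 2 * \<alpha>\<^sup>2 * Q m"]
    unfolding M sum_pairs by (simp add: sum_subtractf sum_distrib_left)
  have Q: "(\<Sum>m<M. Q m) = 2 * P * (level_energy h n D i - level_energy h n D (Suc i))"
    using level_energy_diff[OF i, of n D] unfolding Q_def M_def P_def by (simp add: field_simps)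
  have "(2::nat) ^ h = 2 ^ i * (2 * M)" using i by (simp flip: M power_add)
  then have "(2::real) ^ h = P * (2 * real M)" unfolding P_def by (metis of_nat_mult of_nat_numeral of_nat_power)
  then have "2 ^ h * \<mu> - \<mu>\<^sup>2 * (level_energy h n D i - level_energy h n D (Suc i))
      = P * (real M * (4 * \<alpha> * P) - 2 * \<alpha>\<^sup>2 * (\<Sum>m<M. Q m))"
    unfolding Q using P by (simp add: \<alpha>_def field_simps power2_eq_square)
  also have "\<dots> \<le> P * (\<Sum>j<2 ^ (h - i). Rres n D (level_edge i j))"
    using R P by (intro mult_left_mono) auto
  finally show ?thesis by (simp add: P_def)
qed

text \<open>The choice \<open>\<mu> = (h - 1) / (2 c)\<close> optimises the telescoped bound.\<close>

lemma telescoping_quadratic_lower: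
  fixes a F :: "nat \<Rightarrow> real" and N c :: real
  assumes a: "\<And>i \<mu>. i \<in> {1..<h} \<Longrightarrow> N * \<mu> - \<mu>\<^sup>2 * (F i - F (Suc i)) \<le> a i"
    and F: "F 1 - F h \<le> N * c" and c: "0 < c" and h: "1 \<le> h"
  shows "N * (real h - 1)\<^sup>2 / (4 * c) \<le> (\<Sum>i\<in>{1..<h}. a i)"
proof -
  define \<mu> where "\<mu> = (real h - 1) / (2 * c)"
  have "N * (real h - 1)\<^sup>2 / (4 * c) = (real h - 1) * N * \<mu> - \<mu>\<^sup>2 * (N * c)"
    using c by (simp add: \<mu>_def field_simps power2_eq_square)
  also have "\<dots> \<le> (real h - 1) * N * \<mu> - \<mu>\<^sup>2 * (F 1 - F h)"
    using F by (simp add: mult_left_mono)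
  also have "\<dots> = (\<Sum>i\<in>{1..<h}. N * \<mu> - \<mu>\<^sup>2 * (F i - F (Suc i)))"
  proof -
    have "(\<Sum>i\<in>{1..<h}. F i - F (Suc i)) = - (\<Sum>i\<in>{1..<h}. F (Suc i) - F i)"
      by (simp add: sum_negf[symmetric])
    then have "(\<Sum>i\<in>{1..<h}. F i - F (Suc i)) = F 1 - F h" using sum_Suc_diff'[OF h, of F] by simp
    then show ?thesis using h by (simp add: sum_subtractf sum_distrib_left[symmetric] of_nat_diff)
  qed
  also have "\<dots> \<le> (\<Sum>i\<in>{1..<h}. a i)" by (intro sum_mono a)
  finally show ?thesis .
qed

lemma levels_Rres_ge:
  assumes sp: "sym_pos_def (nV h) D" and le: "cut_le (nV h) D (laplacian (nV h) (G_edges h k))"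
    and h: "1 \<le> h"
  shows "2 ^ h * (real h - 1)\<^sup>2 / (4 * real (h + k))
    \<le> (\<Sum>i\<in>{1..<h}. 2 ^ i * (\<Sum>j<2 ^ (h - i). Rres (nV h) D (level_edge i j)))"
proof (rule telescoping_quadratic_lower[where F = "level_energy h (nV h) D"])
  show "level_energy h (nV h) D 1 - level_energy h (nV h) D h \<le> 2 ^ h * real (h + k)"
    using level_energy_Suc_le[OF sp, of 0 h] level_energy_nonneg[OF sp, of h h]
      level_energy_0_le[OF sp le] h by simp
  show "2 ^ h * \<mu> - \<mu>\<^sup>2 * (level_energy h (nV h) D i - level_energy h (nV h) D (Suc i))
      \<le> 2 ^ i * (\<Sum>j<2 ^ (h - i). Rres (nV h) D (level_edge i j))" if "i \<in> {1..<h}" for i \<mu>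
    using that by (intro level_Rres_ge sp) (auto simp: nV_def)
qed (use h in auto)

lemma square_half_le_square_pred:
  fixes x :: real
  assumes "4 \<le> x"
  shows "x\<^sup>2 / 2 \<le> (x - 1)\<^sup>2"
proof -
  have "0 \<le> x * (x - 4)" using assms by simp
  then show ?thesis by (simp add: power2_eq_square algebra_simps)
qed

theorem mainTheorem14:
  fixes h k :: nat and D :: "real mat"
  assumes "h > k" and "k > 2"
    and "sym_pos_def (nV h) D"
    and "cut_le (nV h) D (laplacian (nV h) (G_edges h k))"
  shows "Max {cut_avg (nV h) D (G_edges h k) S | S. S \<subseteq> {0..<nV h} \<and> S \<noteq> {} \<and> S \<noteq> {0..<nV h}}
           \<ge> real (h ^ 2) / (8 * real ((h + k) ^ 2))"
proof -
  let ?M = "Max {cut_avg (nV h) D (G_edges h k) S | S. S \<subseteq> {0..<nV h} \<and> S \<noteq> {} \<and> S \<noteq> {0..<nV h}}"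
  let ?R = "Rres (nV h) D" and ?c = "real (h + k)"
  have h: "4 \<le> h" using assms(1,2) by linarith
  have "2 ^ h * ((real h - 1)\<^sup>2 / (4 * ?c)) \<le> (\<Sum>i\<in>{1..<h}. 2 ^ i * (\<Sum>j<2 ^ (h - i). ?R (level_edge i j)))"
    using levels_Rres_ge[OF assms(3,4)] h by simp
  also have "\<dots> = (\<Sum>s<2 ^ h. \<Sum>i\<in>{1..<h}. ?R (level_edge i (s div 2 ^ i)))"
    by (rule sum_prefix_level_edges[symmetric])
  also have "\<dots> \<le> (\<Sum>s<(2::nat) ^ h. ?c * ?M)"
    by (intro sum_mono prefix_level_Rres_le_Max assms(3)) simp
  also have "\<dots> = 2 ^ h * (?c * ?M)" by simp
  finally have "(real h - 1)\<^sup>2 / (4 * ?c) \<le> ?c * ?M" by (rule mult_left_le_imp_le) simp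
  then have "(real h - 1)\<^sup>2 / (4 * ?c) / ?c \<le> ?M" using h by (simp add: pos_divide_le_eq mult_ac)
  then have "(real h - 1)\<^sup>2 / (4 * ?c\<^sup>2) \<le> ?M" by (simp add: power2_eq_square algebra_simps)
  moreover have "(real h)\<^sup>2 / 2 / (4 * ?c\<^sup>2) \<le> (real h - 1)\<^sup>2 / (4 * ?c\<^sup>2)"
    using h by (intro divide_right_mono square_half_le_square_pred) auto
  ultimately show ?thesis by simp
qed

end
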